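(* For every integer $q\ge 2$, there exists a $\mathrm{TOC}_q(4,4,3)$.
   Context: $\mathcal{H}_q(n,w)$ is the set of all words of length $n$ over $\mathbb{Z}_q$ with exactly $w$ nonzero entries, with the Hamming distance. An $(n,d,w)_q$-code is a nonempty subset of $\mathcal{H}_q(n,w)$ in which any two distinct words have Hamming distance at least $d$; $A_q(n,d,w)$ is the maximum size of such a code and a code of this size is optimal. A $\mathrm{TOC}_q(n,d,w)$ is a partition of $\mathcal{H}_q(n,w)$ into mutually disjoint optimal $(n,d,w)_q$-codes. *)

theory Defs
  imports Main
begin

definition weight :: "nat list \<Rightarrow> nat" where
  "weight x = card {i. i < length x \<and> x ! i \<noteq> 0}"

definition hdist :: "nat list \<Rightarrow> nat list \<Rightarrow> nat" where
  "hdist x y = card {i. i < length x \<and> x ! i \<noteq> y ! i}"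

definition Hq :: "nat \<Rightarrow> nat \<Rightarrow> nat \<Rightarrow> nat list set" where
  "Hq q n w = {x. length x = n \<and> set x \<subseteq> {0..<q} \<and> weight x = w}"

definition is_code :: "nat \<Rightarrow> nat \<Rightarrow> nat \<Rightarrow> nat \<Rightarrow> nat list set \<Rightarrow> bool" where
  "is_code q n d w C \<longleftrightarrow> C \<noteq> {} \<and> C \<subseteq> Hq q n w \<and>
     (\<forall>x\<in>C. \<forall>y\<in>C. x \<noteq> y \<longrightarrow> hdist x y \<ge> d)"

definition Aq :: "nat \<Rightarrow> nat \<Rightarrow> nat \<Rightarrow> nat \<Rightarrow> nat" where
  "Aq q n d w = Max (card ` {C. is_code q n d w C})"

definition optimal_code :: "nat \<Rightarrow> nat \<Rightarrow> nat \<Rightarrow> nat \<Rightarrow> nat list set \<Rightarrow> bool" where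
  "optimal_code q n d w C \<longleftrightarrow> is_code q n d w C \<and> card C = Aq q n d w"

definition is_TOC :: "nat \<Rightarrow> nat \<Rightarrow> nat \<Rightarrow> nat \<Rightarrow> nat list set set \<Rightarrow> bool" where
  "is_TOC q n d w P \<longleftrightarrow> (\<Union>P = Hq q n w) \<and> (\<forall>C\<in>P. optimal_code q n d w C) \<and>
     (\<forall>C1\<in>P. \<forall>C2\<in>P. C1 \<noteq> C2 \<longrightarrow> C1 \<inter> C2 = {})"

end

theory Submission
  imports Defs "HOL-Number_Theory.Cong"
begin

text \<open>
  In a code of length 4 and minimum distance 4 distinct codewords differ in every coordinate, so a
  coordinate carries at most one 0 and at most \<open>q - 1\<close> nonzero symbols among the codewords. With
  three nonzero entries per codeword this gives \<open>|C| \<le> min 4 (4 (q - 1) / 3)\<close>, i.e. the bounds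
  1, 2 and 4 for \<open>q = 2\<close>, \<open>q = 3\<close> and \<open>q \<ge> 4\<close>; a partition of the words of weight 3 into codes
  meeting the bound is then a TOC.

  For \<open>q = 2\<close> singletons do. For \<open>q = 3\<close> each word is paired with a word at distance 4 by an
  involution. For \<open>q = m + 1 \<ge> 4\<close> the nonzero symbols are indexed by residues mod \<open>m\<close>, and the
  code with parameters \<open>a, b, c\<close> has four words: the \<open>i\<close>-th has its zero at position \<open>i\<close> and
  carries the remaining three of the four residues \<open>a, b, c, a + b + c\<close> (up to fixed shifts).
  Since any three of these determine \<open>a, b, c\<close> modulo \<open>m\<close>, a single word determines its code, so
  two codes of the family are equal or disjoint, and every word of weight 3 lies in one of them.
\<close>

lemma finite_Hq: "finite (Hq q n w)"
proof (rule finite_subset)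
  show "Hq q n w \<subseteq> {x. set x \<subseteq> {0..<q} \<and> length x = n}"
    by (auto simp: Hq_def)
qed (rule finite_lists_length_eq, simp)

lemma is_code_finite: "is_code q n d w C \<Longrightarrow> finite C"
  unfolding is_code_def using finite_Hq finite_subset by blast

lemma Aq_eqI:
  assumes "is_code q n d w C" "card C = B" "\<And>C'. is_code q n d w C' \<Longrightarrow> card C' \<le> B"
  shows "Aq q n d w = B"
proof -
  have "{C. is_code q n d w C} \<subseteq> Pow (Hq q n w)"
    by (auto simp: is_code_def)
  then have "finite {C. is_code q n d w C}"
    using finite_Hq by (rule finite_subset[OF _ finite_Pow_iff[THEN iffD2]])
  with assms show ?thesis
    unfolding Aq_def by (intro Max_eqI) auto
qed

lemma is_TOCI:
  assumes cover: "\<Union>P = Hq q n w"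
    and codes: "\<And>C. C \<in> P \<Longrightarrow> is_code q n d w C \<and> card C = B"
    and bound: "\<And>C. is_code q n d w C \<Longrightarrow> card C \<le> B"
    and meet: "\<And>C C'. C \<in> P \<Longrightarrow> C' \<in> P \<Longrightarrow> C \<inter> C' \<noteq> {} \<Longrightarrow> C = C'"
  shows "is_TOC q n d w P"
proof -
  have "optimal_code q n d w C" if "C \<in> P" for C
    using codes[OF that] Aq_eqI[of q n d w C B] bound by (simp add: optimal_code_def)
  with cover meet show ?thesis
    unfolding is_TOC_def by blast
qed

lemma weight_eq_length_filter: "weight x = length (filter (\<lambda>v. v \<noteq> 0) x)"
  by (simp add: weight_def length_filter_conv_card)

lemma hdist_eq_length_filter:
  "length x = length y \<Longrightarrow> hdist x y = length (filter (\<lambda>(u, v). u \<noteq> v) (zip x y))"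
  unfolding hdist_def length_filter_conv_card by (intro arg_cong[where f = card]) auto

lemma weight_Nil [simp]: "weight [] = 0"
  by (simp add: weight_def)

lemma weight_Cons [simp]: "weight (v # x) = (if v = 0 then 0 else 1) + weight x"
  by (simp add: weight_eq_length_filter)

lemma hdist_Nil [simp]: "hdist [] y = 0"
  by (simp add: hdist_def)

lemma hdist_Cons [simp]:
  "length x = length y \<Longrightarrow> hdist (u # x) (v # y) = (if u = v then 0 else 1) + hdist x y"
  by (simp add: hdist_eq_length_filter)

lemma hdist_commute: "length x = length y \<Longrightarrow> hdist x y = hdist y x"
  unfolding hdist_def by (metis (no_types, lifting))

lemma nth_less_if_in_Hq: "x \<in> Hq q n w \<Longrightarrow> k < n \<Longrightarrow> x ! k < q"
  unfolding Hq_def using nth_mem by fastforce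

lemma ex_nth_eq_0_if_in_Hq:
  assumes "x \<in> Hq q n w" "w < n"
  shows "\<exists>k<n. x ! k = 0"
proof (rule ccontr)
  assume "\<not> ?thesis"
  then have "{i. i < length x \<and> x ! i \<noteq> 0} = {..<length x}"
    using assms(1) by (auto simp: Hq_def)
  then have "weight x = n"
    using assms(1) by (simp add: Hq_def weight_def)
  with assms show False by (simp add: Hq_def)
qed

lemma nth_neq_if_length_le_hdist:
  assumes "length x = n" "length y = n" "n \<le> hdist x y" "k < n"
  shows "x ! k \<noteq> y ! k"
proof
  assume "x ! k = y ! k"
  then have "{i. i < length x \<and> x ! i \<noteq> y ! i} \<subseteq> {..<n} - {k}"
    using assms(1) by auto
  then have "hdist x y \<le> card ({..<n} - {k})"
    unfolding hdist_def by (intro card_mono) auto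
  also have "\<dots> < n"
    using assms(4) by simp
  finally show False
    using assms(3) by simp
qed

lemma full_distance_code_inj_on_nth:
  assumes "is_code q n n w C" "k < n"
  shows "inj_on (\<lambda>x. x ! k) C"
proof (rule inj_onI)
  fix x y assume "x \<in> C" "y \<in> C" "x ! k = y ! k"
  with assms show "x = y"
    using nth_neq_if_length_le_hdist[of x n y k] by (auto simp: is_code_def Hq_def)
qed

lemma full_distance_code_card_le:
  assumes C: "is_code q n n w C"
  shows "w * card C \<le> n * (q - 1)"
proof -
  have fin: "finite C" using C by (rule is_code_finite)
  have weight: "card {k \<in> {..<n}. x ! k \<noteq> 0} = w" if "x \<in> C" for x
    using C that unfolding is_code_def Hq_def weight_def by (auto simp: lessThan_def)
  have column: "card {x \<in> C. x ! k \<noteq> 0} \<le> q - 1" if "k < n" for k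
  proof -
    have "inj_on (\<lambda>x. x ! k) {x \<in> C. x ! k \<noteq> 0}"
      using full_distance_code_inj_on_nth[OF C that] by (auto intro: inj_on_subset)
    then have "card {x \<in> C. x ! k \<noteq> 0} \<le> card {1..<q}"
      using C that nth_less_if_in_Hq by (intro card_inj_on_le) (auto simp: is_code_def)
    then show ?thesis by simp
  qed
  have "w * card C = (\<Sum>x\<in>C. card {k \<in> {..<n}. x ! k \<noteq> 0})"
    using weight by simp
  also have "\<dots> = (\<Sum>k<n. card {x \<in> C. x ! k \<noteq> 0})"
    using sum.swap_restrict[OF fin finite_lessThan, of "\<lambda>_ _. 1::nat"] by simp
  also have "\<dots> \<le> n * (q - 1)"
    using sum_mono[of "{..<n}" _ "\<lambda>_. q - 1"] column by simp
  finally show ?thesis .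
qed

lemma full_distance_code_card_le_length:
  assumes C: "is_code q n n w C" and "w < n"
  shows "card C \<le> n"
proof -
  have "\<exists>k<n. x ! k = 0" if "x \<in> C" for x
    using C that \<open>w < n\<close> ex_nth_eq_0_if_in_Hq by (auto simp: is_code_def)
  then have "card C \<le> card (\<Union>k<n. {x \<in> C. x ! k = 0})"
    using is_code_finite[OF C] by (intro card_mono) auto
  also have "\<dots> \<le> (\<Sum>k<n. card {x \<in> C. x ! k = 0})"
    by (rule card_UN_le) simp
  also have "\<dots> \<le> (\<Sum>k<n. 1)"
  proof (rule sum_mono)
    fix k assume "k \<in> {..<n}"
    then have "inj_on (\<lambda>x. x ! k) {x \<in> C. x ! k = 0}"
      using full_distance_code_inj_on_nth[OF C] by (auto intro: inj_on_subset)
    then have "card {x \<in> C. x ! k = 0} \<le> card {0::nat}"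
      by (rule card_inj_on_le) auto
    then show "card {x \<in> C. x ! k = 0} \<le> 1" by simp
  qed
  finally show ?thesis by simp
qed

lemma Hq_4_3_cases:
  assumes "x \<in> Hq q 4 3"
  obtains (zero0) b c d where "x = [0, b, c, d]" "{b, c, d} \<subseteq> {1..<q}"
    | (zero1) a c d where "x = [a, 0, c, d]" "{a, c, d} \<subseteq> {1..<q}"
    | (zero2) a b d where "x = [a, b, 0, d]" "{a, b, d} \<subseteq> {1..<q}"
    | (zero3) a b c where "x = [a, b, c, 0]" "{a, b, c} \<subseteq> {1..<q}"
proof -
  have "length x = 4"
    using assms by (simp add: Hq_def)
  then obtain a b c d where x: "x = [a, b, c, d]"
    by (auto simp: numeral_eq_Suc length_Suc_conv)
  moreover have "{a, b, c, d} \<subseteq> {0..<q}"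
    and "(if a = 0 then 0 else 1) + (if b = 0 then 0 else 1) + (if c = 0 then 0 else 1)
      + (if d = 0 then 0 else 1) = (3::nat)"
    using assms by (auto simp: Hq_def x)
  ultimately show thesis
    using that by (cases "a = 0"; cases "b = 0"; cases "c = 0"; cases "d = 0") auto
qed

lemma exists_TOC_4_4_3_2: "\<exists>P. is_TOC 2 4 4 3 P"
proof -
  have "is_TOC 2 4 4 3 ((\<lambda>x. {x}) ` Hq 2 4 3)"
  proof (rule is_TOCI[where B = 1])
    show "card C \<le> 1" if "is_code 2 4 4 3 C" for C
      using full_distance_code_card_le[OF that] by simp
  qed (auto simp: is_code_def)
  then show ?thesis ..
qed

lemma involution_pair_meet:
  assumes "f (f x) = x" "f (f y) = y" "{x, f x} \<inter> {y, f y} \<noteq> {}"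
  shows "{x, f x} = {y, f y}"
proof -
  obtain u where "u = x \<or> u = f x" "u = y \<or> u = f y"
    using assms(3) by blast
  then have "y = x \<or> y = f x"
    using assms(1,2) by metis
  then show ?thesis
    using assms(1,2) by auto
qed

(* Swap the half that contains the zero and flip the nonzero symbols \<open>v \<mapsto> 3 - v\<close> of the other
   half; this changes every coordinate. *)
definition partner :: "nat list \<Rightarrow> nat list" where
  "partner x = (if x ! 0 = 0 \<or> x ! 1 = 0 then [x ! 1, x ! 0, 3 - x ! 2, 3 - x ! 3]
     else [3 - x ! 0, 3 - x ! 1, x ! 3, x ! 2])"

lemma partner_Hq_3_4_3:
  assumes "x \<in> Hq 3 4 3"
  shows "partner x \<in> Hq 3 4 3" and "partner (partner x) = x" and "4 \<le> hdist x (partner x)"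
proof -
  have flip_neq: "v \<noteq> 3 - v" for v :: nat
    by arith
  from assms show "partner x \<in> Hq 3 4 3" "partner (partner x) = x" "4 \<le> hdist x (partner x)"
    by (cases rule: Hq_4_3_cases; auto simp: partner_def Hq_def flip_neq)+
qed

lemma exists_TOC_4_4_3_3: "\<exists>P. is_TOC 3 4 4 3 P"
proof -
  have "is_TOC 3 4 4 3 ((\<lambda>x. {x, partner x}) ` Hq 3 4 3)"
  proof (rule is_TOCI[where B = 2])
    show "\<Union>((\<lambda>x. {x, partner x}) ` Hq 3 4 3) = Hq 3 4 3"
      using partner_Hq_3_4_3(1) by blast
    show "is_code 3 4 4 3 C \<and> card C = 2" if C: "C \<in> (\<lambda>x. {x, partner x}) ` Hq 3 4 3" for C
    proof -
      obtain x where x: "x \<in> Hq 3 4 3" and C: "C = {x, partner x}"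
        using C by blast
      have px: "partner x \<in> Hq 3 4 3" and d: "4 \<le> hdist x (partner x)"
        using partner_Hq_3_4_3[OF x] by simp_all
      have "4 \<le> hdist (partner x) x"
        using d hdist_commute[of x "partner x"] x px by (simp add: Hq_def)
      moreover have "x \<noteq> partner x"
        using d by (auto simp: hdist_def)
      ultimately show ?thesis
        unfolding C is_code_def using x px d by auto
    qed
    show "card C \<le> 2" if "is_code 3 4 4 3 C" for C
      using full_distance_code_card_le[OF that] by simp
    show "C = C'" if C: "C \<in> (\<lambda>x. {x, partner x}) ` Hq 3 4 3"
      and C': "C' \<in> (\<lambda>x. {x, partner x}) ` Hq 3 4 3" and meet: "C \<inter> C' \<noteq> {}" for C C'
    proof -
      obtain x y where x: "x \<in> Hq 3 4 3" and y: "y \<in> Hq 3 4 3"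
        and Cx: "C = {x, partner x}" and Cy: "C' = {y, partner y}"
        using C C' by blast
      show ?thesis
        using involution_pair_meet[OF partner_Hq_3_4_3(2)[OF x] partner_Hq_3_4_3(2)[OF y]] meet
        unfolding Cx Cy by blast
    qed
  qed
  then show ?thesis ..
qed

definition nonzero_sym :: "nat \<Rightarrow> int \<Rightarrow> nat" where
  "nonzero_sym m t = nat (t mod int m) + 1"

lemma nonzero_sym_neq_0 [simp]: "nonzero_sym m t \<noteq> 0"
  by (simp add: nonzero_sym_def)

lemma nonzero_sym_le:
  assumes "0 < m"
  shows "nonzero_sym m t \<le> m"
proof -
  have "nat (t mod int m) < m"
    using assms by (simp add: nat_less_iff)
  then show ?thesis
    unfolding nonzero_sym_def by simp
qed

lemma nonzero_sym_eq_iff: "0 < m \<Longrightarrow> nonzero_sym m s = nonzero_sym m t \<longleftrightarrow> [s = t] (mod int m)"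
  by (auto simp: nonzero_sym_def cong_def nat_eq_iff2)

lemma nonzero_sym_cong: "[s = t] (mod int m) \<Longrightarrow> nonzero_sym m s = nonzero_sym m t"
  by (simp add: nonzero_sym_def cong_def)

lemma nonzero_sym_eqI:
  assumes "t = int v - 1" "v \<in> {1..<Suc m}"
  shows "nonzero_sym m t = v"
proof -
  have "t mod int m = t"
    using assms by (intro mod_pos_pos_trivial) auto
  with assms show ?thesis
    unfolding nonzero_sym_def by (simp; arith)
qed

lemma nonzero_sym_add_neq:
  assumes "0 < k" "k < m"
  shows "nonzero_sym m (t + int k) \<noteq> nonzero_sym m t"
proof
  assume "nonzero_sym m (t + int k) = nonzero_sym m t"
  then have "int m dvd int k"
    using assms by (simp add: nonzero_sym_eq_iff cong_iff_dvd_diff)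
  with assms show False by (simp add: nat_dvd_not_less)
qed

lemma cong_add3_cancel:
  fixes a b c :: int
  assumes "[a + b + c = a' + b' + c'] (mod n)"
  shows "[b = b'] (mod n) \<Longrightarrow> [c = c'] (mod n) \<Longrightarrow> [a = a'] (mod n)"
    and "[a = a'] (mod n) \<Longrightarrow> [c = c'] (mod n) \<Longrightarrow> [b = b'] (mod n)"
    and "[a = a'] (mod n) \<Longrightarrow> [b = b'] (mod n) \<Longrightarrow> [c = c'] (mod n)"
  using cong_diff[OF assms cong_add[of b b' n c c']] cong_diff[OF assms cong_add[of a a' n c c']]
    cong_diff[OF assms cong_add[of a a' n b b']] by simp_all

(* Position \<open>j \<noteq> i\<close> of word \<open>i\<close> carries the \<open>j\<close>-th of \<open>a, b, c, a + b + c\<close> shifted by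
   \<open>(i - j - 1) mod 4\<close>, so each column consists of 0 and three consecutive residues. *)
definition quad_code :: "nat \<Rightarrow> int \<Rightarrow> int \<Rightarrow> int \<Rightarrow> nat list set" where
  "quad_code m a b c =
     {[0, nonzero_sym m (b + 2), nonzero_sym m (c + 1), nonzero_sym m (a + b + c)],
      [nonzero_sym m a, 0, nonzero_sym m (c + 2), nonzero_sym m (a + b + c + 1)],
      [nonzero_sym m (a + 1), nonzero_sym m b, 0, nonzero_sym m (a + b + c + 2)],
      [nonzero_sym m (a + 2), nonzero_sym m (b + 1), nonzero_sym m c, 0]}"

lemma quad_code_is_code:
  assumes "3 \<le> m"
  shows "is_code (Suc m) 4 4 3 (quad_code m a b c)" and "card (quad_code m a b c) = 4"
proof -
  have ne: "nonzero_sym m (t + 1) \<noteq> nonzero_sym m t" "nonzero_sym m (t + 2) \<noteq> nonzero_sym m t"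
    "nonzero_sym m (t + 2) \<noteq> nonzero_sym m (t + 1)" for t
    using assms nonzero_sym_add_neq[of 1 m] nonzero_sym_add_neq[of 2 m]
      nonzero_sym_add_neq[of 1 m "t + 1"] by (simp_all add: add.assoc)
  have le: "nonzero_sym m t < Suc m" for t
    using assms nonzero_sym_le[of m t] by simp
  show "is_code (Suc m) 4 4 3 (quad_code m a b c)"
    unfolding is_code_def Hq_def quad_code_def using ne ne[THEN not_sym] le by auto
  show "card (quad_code m a b c) = 4"
    unfolding quad_code_def by simp
qed

lemma quad_code_cong:
  assumes a: "[a = a'] (mod int m)" and b: "[b = b'] (mod int m)" and c: "[c = c'] (mod int m)"
  shows "quad_code m a b c = quad_code m a' b' c'"
proof -
  have shift: "nonzero_sym m (s + k) = nonzero_sym m (s' + k)" if "[s = s'] (mod int m)" for s s' k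
    using that by (intro nonzero_sym_cong cong_add) auto
  have abc: "[a + b + c = a' + b' + c'] (mod int m)"
    using a b c by (intro cong_add)
  show ?thesis
    unfolding quad_code_def
    by (simp add: shift[OF a] shift[OF b] shift[OF c] shift[OF abc]
        nonzero_sym_cong[OF a] nonzero_sym_cong[OF b] nonzero_sym_cong[OF c] nonzero_sym_cong[OF abc])
qed

lemma quad_code_meet:
  assumes "0 < m" "u \<in> quad_code m a b c" "u \<in> quad_code m a' b' c'"
  shows "quad_code m a b c = quad_code m a' b' c'"
proof -
  have "[a = a'] (mod int m) \<and> [b = b'] (mod int m) \<and> [c = c'] (mod int m)"
    using assms(2,3) unfolding quad_code_def
    by (auto simp: nonzero_sym_eq_iff[OF assms(1)] cong_add_rcancel
        intro: cong_add3_cancel)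
  then show ?thesis
    by (intro quad_code_cong) auto
qed

lemma quad_code_cover:
  assumes "x \<in> Hq (Suc m) 4 3"
  shows "\<exists>a b c. x \<in> quad_code m a b c"
  using assms
proof (cases rule: Hq_4_3_cases)
  case (zero0 b c d)
  let ?b = "int b - 3" and ?c = "int c - 2"
  have "x = [0, nonzero_sym m (?b + 2), nonzero_sym m (?c + 1),
      nonzero_sym m ((int d - 1 - ?b - ?c) + ?b + ?c)]"
    using zero0 by (simp add: nonzero_sym_eqI)
  then show ?thesis
    unfolding quad_code_def by blast
next
  case (zero1 a c d)
  let ?a = "int a - 1" and ?c = "int c - 3"
  have "x = [nonzero_sym m ?a, 0, nonzero_sym m (?c + 2),
      nonzero_sym m (?a + (int d - 2 - ?a - ?c) + ?c + 1)]"
    using zero1 by (simp add: nonzero_sym_eqI)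
  then show ?thesis
    unfolding quad_code_def by blast
next
  case (zero2 a b d)
  let ?a = "int a - 2" and ?b = "int b - 1"
  have "x = [nonzero_sym m (?a + 1), nonzero_sym m ?b, 0,
      nonzero_sym m (?a + ?b + (int d - 3 - ?a - ?b) + 2)]"
    using zero2 by (simp add: nonzero_sym_eqI)
  then show ?thesis
    unfolding quad_code_def by blast
next
  case (zero3 a b c)
  let ?a = "int a - 3" and ?b = "int b - 2" and ?c = "int c - 1"
  have "x = [nonzero_sym m (?a + 2), nonzero_sym m (?b + 1), nonzero_sym m ?c, 0]"
    using zero3 by (simp add: nonzero_sym_eqI)
  then show ?thesis
    unfolding quad_code_def by blast
qed

lemma exists_TOC_4_4_3_ge_4:
  assumes "4 \<le> q"
  shows "\<exists>P. is_TOC q 4 4 3 P"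
proof -
  define m where "m = q - 1"
  have m: "3 \<le> m" and m_pos: "0 < m" and q: "q = Suc m"
    using assms by (auto simp: m_def)
  let ?P = "{quad_code m a b c | a b c. True}"
  have "is_TOC q 4 4 3 ?P"
  proof (rule is_TOCI[where B = 4])
    show codes: "is_code q 4 4 3 C \<and> card C = 4" if "C \<in> ?P" for C
      using that quad_code_is_code[OF m] unfolding q by blast
    show "\<Union>?P = Hq q 4 3"
    proof
      show "\<Union>?P \<subseteq> Hq q 4 3"
        using codes unfolding is_code_def by blast
      show "Hq q 4 3 \<subseteq> \<Union>?P"
        using quad_code_cover unfolding q by blast
    qed
    show "card C \<le> 4" if "is_code q 4 4 3 C" for C
      using full_distance_code_card_le_length[OF that] by simp
    show "C = C'" if "C \<in> ?P" and "C' \<in> ?P" and "C \<inter> C' \<noteq> {}" for C C'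
      using that quad_code_meet[OF m_pos] by blast
  qed
  then show ?thesis ..
qed

theorem theorem4p6:
  fixes q :: nat
  assumes "q \<ge> 2"
  shows "\<exists>P. is_TOC q 4 4 3 P"
proof -
  consider "q = 2" | "q = 3" | "4 \<le> q"
    using assms by linarith
  then show ?thesis
    using exists_TOC_4_4_3_2 exists_TOC_4_4_3_3 exists_TOC_4_4_3_ge_4 by cases auto
qed

end
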